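(* Let $S$ be a semigroup, $I$ an interior ideal of $S$, and $a\in S$ with $a\notin I$. Then there exists an irreducible interior ideal $B$ of $S$ such that $I\subseteq B$ and $a\notin B$.
   Context: A subsemigroup $I$ of $S$ (non-empty with $II\subseteq I$) is an interior ideal if $SIS\subseteq I$. An interior ideal $I$ is irreducible if for all interior ideals $I_1,I_2$ of $S$, $I_1\cap I_2=I$ implies $I_1=I$ or $I_2=I$. *)

theory Defs
  imports Main
begin

text \<open>The semigroup S is the whole carrier of a type of class semigroup_mult.\<close>

definition subsemigroup :: "'a::semigroup_mult set \<Rightarrow> bool" where
  "subsemigroup I \<longleftrightarrow> I \<noteq> {} \<and> (\<forall>x\<in>I. \<forall>y\<in>I. x * y \<in> I)"

definition interior_ideal :: "'a::semigroup_mult set \<Rightarrow> bool" where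
  "interior_ideal I \<longleftrightarrow> subsemigroup I \<and> (\<forall>s t x. x \<in> I \<longrightarrow> s * x * t \<in> I)"

definition irreducible_interior_ideal :: "'a::semigroup_mult set \<Rightarrow> bool" where
  "irreducible_interior_ideal I \<longleftrightarrow> interior_ideal I \<and>
     (\<forall>I1 I2. interior_ideal I1 \<longrightarrow> interior_ideal I2 \<longrightarrow> I1 \<inter> I2 = I \<longrightarrow> I1 = I \<or> I2 = I)"

end

theory Submission
  imports Defs
begin

text \<open>By Zorn's lemma there is an interior ideal \<open>M \<supseteq> I\<close> maximal among those omitting \<open>a\<close>.
  It is irreducible: if \<open>M = I\<^sub>1 \<inter> I\<^sub>2\<close> with both \<open>I\<^sub>k\<close> strictly larger than \<open>M\<close>,
  maximality puts \<open>a\<close> into both, hence into \<open>M\<close>.\<close>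

lemma interior_ideal_Union_chain:
  assumes "C \<noteq> {}" and "subset.chain {J. interior_ideal J} C"
  shows "interior_ideal (\<Union>C)"
proof -
  have ideals: "\<And>J. J \<in> C \<Longrightarrow> interior_ideal J"
    and linear: "\<And>X Y. X \<in> C \<Longrightarrow> Y \<in> C \<Longrightarrow> X \<subseteq> Y \<or> Y \<subseteq> X"
    using assms(2) unfolding subset.chain_def by auto
  have "\<Union>C \<noteq> {}"
    using assms(1) ideals unfolding interior_ideal_def subsemigroup_def by blast
  moreover have "x * y \<in> \<Union>C" if "x \<in> \<Union>C" and "y \<in> \<Union>C" for x y
  proof -
    obtain X Y where XY: "X \<in> C" "Y \<in> C" "x \<in> X" "y \<in> Y"
      using \<open>x \<in> \<Union>C\<close> \<open>y \<in> \<Union>C\<close> by blast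
    then obtain Z where "Z \<in> C" "x \<in> Z" "y \<in> Z"
      using linear by blast
    then show ?thesis
      using ideals unfolding interior_ideal_def subsemigroup_def by blast
  qed
  moreover have "s * x * t \<in> \<Union>C" if "x \<in> \<Union>C" for s t x
    using that ideals unfolding interior_ideal_def by blast
  ultimately show ?thesis
    unfolding interior_ideal_def subsemigroup_def by blast
qed

lemma maximal_interior_ideal_avoiding_exists:
  assumes "interior_ideal I" and "a \<notin> I"
  obtains M where "interior_ideal M" "I \<subseteq> M" "a \<notin> M"
    and "\<And>J. interior_ideal J \<Longrightarrow> M \<subseteq> J \<Longrightarrow> a \<notin> J \<Longrightarrow> J = M"
proof -
  define F where "F = {J. interior_ideal J \<and> I \<subseteq> J \<and> a \<notin> J}"
  have "\<Union>C \<in> F" if "C \<noteq> {}" and "subset.chain F C" for C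
  proof -
    have "subset.chain {J. interior_ideal J} C"
      using \<open>subset.chain F C\<close> unfolding F_def subset.chain_def by blast
    with \<open>C \<noteq> {}\<close> have "interior_ideal (\<Union>C)"
      by (rule interior_ideal_Union_chain)
    moreover have "C \<subseteq> F"
      using \<open>subset.chain F C\<close> unfolding subset.chain_def by blast
    ultimately show ?thesis
      using \<open>C \<noteq> {}\<close> unfolding F_def by blast
  qed
  moreover have "I \<in> F"
    using assms unfolding F_def by blast
  ultimately obtain M where "M \<in> F" and "\<forall>X\<in>F. M \<subseteq> X \<longrightarrow> X = M"
    using subset_Zorn_nonempty[of F] by blast
  with that show ?thesis
    unfolding F_def by blast
qed

lemma irreducible_if_maximal_avoiding:
  assumes "interior_ideal M" and "a \<notin> M"
    and maximal: "\<And>J. interior_ideal J \<Longrightarrow> M \<subseteq> J \<Longrightarrow> a \<notin> J \<Longrightarrow> J = M"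
  shows "irreducible_interior_ideal M"
  unfolding irreducible_interior_ideal_def
proof (intro conjI allI impI)
  fix I1 I2
  assume "interior_ideal I1" "interior_ideal I2" and M_eq: "I1 \<inter> I2 = M"
  show "I1 = M \<or> I2 = M"
  proof (rule ccontr)
    assume "\<not> (I1 = M \<or> I2 = M)"
    then have "a \<in> I1" and "a \<in> I2"
      using maximal \<open>interior_ideal I1\<close> \<open>interior_ideal I2\<close> M_eq by blast+
    with M_eq \<open>a \<notin> M\<close> show False
      by blast
  qed
qed (rule \<open>interior_ideal M\<close>)

theorem mainTheorem11:
  fixes I :: "'a::semigroup_mult set" and a :: 'a
  assumes "interior_ideal I" and "a \<notin> I"
  shows "\<exists>B. irreducible_interior_ideal B \<and> I \<subseteq> B \<and> a \<notin> B"
proof -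
  obtain M where "interior_ideal M" "I \<subseteq> M" "a \<notin> M"
    and "\<And>J. interior_ideal J \<Longrightarrow> M \<subseteq> J \<Longrightarrow> a \<notin> J \<Longrightarrow> J = M"
    using maximal_interior_ideal_avoiding_exists[OF assms] by blast
  then have "irreducible_interior_ideal M"
    using irreducible_if_maximal_avoiding by blast
  with \<open>I \<subseteq> M\<close> \<open>a \<notin> M\<close> show ?thesis
    by blast
qed

end
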